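(* Let $\pi_1$ be a positive probability density on $\mathbb{R}$ with $\log\pi_1\in C^1(\mathbb{R})$ and suppose that for some $q\in[0,1)$, $\left|\frac{d}{dx_1}\log\pi_1(x_1)\right|=\Theta(|x_1|^q)$ as $|x_1|\to\infty$. Let $X_1\sim\pi_1$ and fix $k\ge0$. Then there exists $\gamma\in(0,\infty)$ such that $\mathbb{P}(|X_1|>k+h)\le\Theta\big(e^{-\gamma h^{1+q}-q\log h}\big)$ as $h\to\infty$, i.e. $\limsup_{h\to\infty}\mathbb{P}(|X_1|>k+h)\,e^{\gamma h^{1+q}+q\log h}<\infty$.
   Context: $F=\Theta(G)$ as $|x_1|\to\infty$ means $\liminf F/G>0$ and $\limsup F/G<\infty$. *)

theory Defs
  imports "HOL-Analysis.Analysis"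
begin

end

theory Submission
  imports Defs
begin

(* Write L = ln \<pi>1 and D = L'. The lower \<Theta>-bound makes |D x| \<ge> c |x|^q > 0 for |x| \<ge> R, so the
   continuous D has constant sign on each tail. It must be negative on [R, \<infinity>) (and positive on
   (-\<infinity>, -R]), since otherwise \<pi>1 would be bounded below on a half-line and could not be
   integrable. Hence L + a |x|^(1+q) with a = c/(1+q) is monotone on each tail, i.e. \<pi>1 has
   stretched exponential decay \<pi>1 x \<le> exp (B - a |x|^(1+q)). Integrating gives
   P(|X| > k + h) = O(exp (-a/2 h^(1+q))), which absorbs the factor exp (a/4 h^(1+q)) h^q. *)

lemma integral_lborel_ge_on_interval:
  fixes f :: "real \<Rightarrow> real"
  assumes f: "integrable lborel f" and nonneg: "\<And>x. 0 \<le> f x"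
    and ge: "\<And>x. a \<le> x \<Longrightarrow> x \<le> b \<Longrightarrow> \<epsilon> \<le> f x" and "a \<le> b"
  shows "\<epsilon> * (b - a) \<le> integral\<^sup>L lborel f"
proof -
  have "integrable lborel (\<lambda>x. \<epsilon> * indicator {a..b} x :: real)"
    by (intro integrable_mult_right integrable_real_indicator) (auto simp: emeasure_lborel_Icc_eq)
  then have "integral\<^sup>L lborel (\<lambda>x. \<epsilon> * indicator {a..b} x :: real) \<le> integral\<^sup>L lborel f"
    by (rule integral_mono[OF _ f]) (auto simp: indicator_def nonneg ge)
  then show ?thesis using \<open>a \<le> b\<close> by simp
qed

lemma not_integrable_lborel_if_ge_on_atLeast:
  fixes f :: "real \<Rightarrow> real"
  assumes nonneg: "\<And>x. 0 \<le> f x" and "0 < \<epsilon>" and ge: "\<And>x. a \<le> x \<Longrightarrow> \<epsilon> \<le> f x"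
  shows "\<not> integrable lborel f"
proof
  assume f: "integrable lborel f"
  define b where "b = a + (integral\<^sup>L lborel f + 1) / \<epsilon>"
  have "0 \<le> integral\<^sup>L lborel f" using nonneg by simp
  then have "a \<le> b" using \<open>0 < \<epsilon>\<close> by (simp add: b_def)
  then have "\<epsilon> * (b - a) \<le> integral\<^sup>L lborel f"
    using integral_lborel_ge_on_interval[OF f nonneg] ge by blast
  then show False using \<open>0 < \<epsilon>\<close> by (simp add: b_def)
qed

lemma connected_pos_if_nonzero:
  fixes D :: "'a::topological_space \<Rightarrow> real"
  assumes "connected S" and cont: "continuous_on S D" and nz: "\<And>x. x \<in> S \<Longrightarrow> D x \<noteq> 0"
    and "x \<in> S" "0 < D x" "y \<in> S"
  shows "0 < D y"
proof (rule ccontr)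
  assume "\<not> 0 < D y"
  have "connected (D ` S)"
    using cont \<open>connected S\<close> by (rule connected_continuous_image)
  moreover have "D y \<in> D ` S" "D x \<in> D ` S"
    using \<open>x \<in> S\<close> \<open>y \<in> S\<close> by simp_all
  ultimately have "{D y..D x} \<subseteq> D ` S"
    by (rule connected_contains_Icc)
  then have "0 \<in> D ` S"
    using \<open>\<not> 0 < D y\<close> \<open>0 < D x\<close> by auto
  then show False using nz by auto
qed

lemma log_deriv_neg_at_top:
  fixes f D :: "real \<Rightarrow> real"
  assumes pos: "\<And>x. 0 < f x" and f: "integrable lborel f"
    and D: "\<And>x. R \<le> x \<Longrightarrow> ((\<lambda>t. ln (f t)) has_real_derivative D x) (at x)"
    and cont: "continuous_on {R..} D" and nz: "\<And>x. R \<le> x \<Longrightarrow> D x \<noteq> 0"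
    and "R \<le> x"
  shows "D x < 0"
proof (rule ccontr)
  assume "\<not> D x < 0"
  then have "0 < D x" using nz \<open>R \<le> x\<close> by force
  have Dpos: "0 < D y" if "R \<le> y" for y
    by (rule connected_pos_if_nonzero[OF connected_Ici cont, of x y])
       (use nz \<open>R \<le> x\<close> \<open>0 < D x\<close> that in simp_all)
  have "ln (f R) \<le> ln (f y)" if "R \<le> y" for y
    by (rule DERIV_nonneg_imp_nondecreasing[OF that])
       (use D Dpos less_imp_le in \<open>blast intro: order_trans\<close>)
  then have "f R \<le> f y" if "R \<le> y" for y
    using that pos by simp
  then show False
    using not_integrable_lborel_if_ge_on_atLeast[of f "f R" R] pos f less_imp_le by blast
qed

lemma log_decay_at_top:
  fixes f D :: "real \<Rightarrow> real"
  assumes pos: "\<And>x. 0 < f x" and f: "integrable lborel f"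
    and D: "\<And>x. R \<le> x \<Longrightarrow> ((\<lambda>t. ln (f t)) has_real_derivative D x) (at x)"
    and cont: "continuous_on {R..} D"
    and "0 < R" "0 < c" "-1 < q"
    and lower: "\<And>x. R \<le> x \<Longrightarrow> c * x powr q < \<bar>D x\<bar>"
    and "R \<le> x"
  shows "ln (f x) \<le> ln (f R) + c / (1 + q) * (R powr (1 + q) - x powr (1 + q))"
proof -
  have nz: "D s \<noteq> 0" if "R \<le> s" for s
  proof -
    have "0 < c * s powr q" using that \<open>0 < R\<close> \<open>0 < c\<close> by simp
    then show ?thesis using lower[OF that] by linarith
  qed
  define g where "g = (\<lambda>t. ln (f t) + c / (1 + q) * t powr (1 + q))"
  have "g x \<le> g R"
  proof (rule DERIV_nonpos_imp_nonincreasing[OF \<open>R \<le> x\<close>])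
    fix t assume t: "R \<le> t"
    then have "0 < t" using \<open>0 < R\<close> by linarith
    have "D t + c * t powr q \<le> 0"
      using log_deriv_neg_at_top[OF pos f D cont nz t] lower[OF t] by linarith
    moreover have "(g has_real_derivative D t + c * t powr q) (at t)"
    proof -
      have "((\<lambda>t. t powr (1 + q)) has_real_derivative (1 + q) * t powr (1 + q - 1)) (at t)"
        using \<open>0 < t\<close> by (rule has_real_derivative_powr)
      then have "(g has_real_derivative D t + c / (1 + q) * ((1 + q) * t powr (1 + q - 1))) (at t)"
        unfolding g_def by (rule DERIV_add[OF D[OF t] DERIV_cmult])
      then show ?thesis using \<open>-1 < q\<close> by simp
    qed
    ultimately show "\<exists>y. (g has_real_derivative y) (at t) \<and> y \<le> 0" by blast
  qed
  then show ?thesis by (simp add: g_def algebra_simps)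
qed

lemma stretched_exp_decay:
  fixes f D :: "real \<Rightarrow> real"
  assumes pos: "\<And>x. 0 < f x" and f: "integrable lborel f"
    and D: "\<And>x. ((\<lambda>t. ln (f t)) has_real_derivative D x) (at x)"
    and cont: "continuous_on UNIV D"
    and R: "0 < R" and c: "0 < c" and q: "-1 < q"
    and lower: "\<And>x. R \<le> \<bar>x\<bar> \<Longrightarrow> c * \<bar>x\<bar> powr q < \<bar>D x\<bar>"
  obtains B where "\<And>x. R \<le> \<bar>x\<bar> \<Longrightarrow> f x \<le> exp (B - c / (1 + q) * \<bar>x\<bar> powr (1 + q))"
proof
  define a where "a = c / (1 + q)"
  define B where "B = max (ln (f R)) (ln (f (- R))) + a * R powr (1 + q)"
  have right: "ln (f x) \<le> B - a * \<bar>x\<bar> powr (1 + q)" if "R \<le> x" for x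
  proof -
    have "ln (f x) \<le> ln (f R) + a * (R powr (1 + q) - x powr (1 + q))"
      unfolding a_def
      by (rule log_decay_at_top[OF pos f D continuous_on_subset[OF cont subset_UNIV] R c q _ that])
         (use lower R in \<open>metis abs_of_pos less_le_trans\<close>)
    then show ?thesis using that R by (simp add: B_def algebra_simps)
  qed
  have left: "ln (f (- x)) \<le> B - a * \<bar>x\<bar> powr (1 + q)" if "R \<le> x" for x
  proof -
    have "((\<lambda>t. ln (f (- t))) has_real_derivative - D (- t)) (at t)" for t
      using DERIV_chain2[OF D DERIV_minus[OF DERIV_ident]] by simp
    moreover have "continuous_on {R..} (\<lambda>t. - D (- t))"
      by (intro continuous_on_minus continuous_on_compose2[OF cont continuous_on_minus[OF continuous_on_id]]) auto
    moreover have "integrable lborel (\<lambda>t. f (- t))"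
      using lborel_integrable_real_affine[OF f, of "-1" 0] by simp
    moreover have "c * t powr q < \<bar>- D (- t)\<bar>" if "R \<le> t" for t
      using lower[of "- t"] that R by simp
    ultimately have "ln (f (- x)) \<le> ln (f (- R)) + a * (R powr (1 + q) - x powr (1 + q))"
      unfolding a_def
      by (intro log_decay_at_top[where f = "\<lambda>t. f (- t)" and D = "\<lambda>t. - D (- t)"] pos R c q that)
    then show ?thesis using that R by (simp add: B_def algebra_simps)
  qed
  fix x :: real assume "R \<le> \<bar>x\<bar>"
  then have "ln (f x) \<le> B - a * \<bar>x\<bar> powr (1 + q)"
    using right[of x] left[of "- x"] by (cases "0 \<le> x") simp_all
  then have "exp (ln (f x)) \<le> exp (B - a * \<bar>x\<bar> powr (1 + q))"
    by simp
  then show "f x \<le> exp (B - c / (1 + q) * \<bar>x\<bar> powr (1 + q))"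
    using pos[of x] by (simp add: a_def)
qed

lemma nn_integral_exp_neg_abs_le:
  fixes b :: real
  assumes b: "0 < b"
  shows "(\<integral>\<^sup>+x. ennreal (exp (- b * \<bar>x\<bar>)) \<partial>lborel) \<le> ennreal (2 / b)"
proof -
  define E where "E x = ennreal (exp (- b * x)) * indicator {0..} x" for x :: real
  have E_borel[measurable]: "E \<in> borel_measurable borel"
    unfolding E_def by measurable
  have "((\<lambda>x. exp (- b * x)) \<longlongrightarrow> 0) at_top"
    using b by (intro filterlim_compose[OF exp_at_bot] filterlim_tendsto_neg_mult_at_bot[OF tendsto_const]
        filterlim_ident) simp
  then have "((\<lambda>x. - exp (- b * x) / b) \<longlongrightarrow> 0) at_top"
    using tendsto_divide[OF tendsto_minus tendsto_const, of _ 0 at_top b] b by simp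
  then have "(\<integral>\<^sup>+x. E x \<partial>lborel) = ennreal (0 - (- exp (- b * 0) / b))"
    unfolding E_def using b
    by (intro nn_integral_FTC_atLeast) (auto intro!: derivative_eq_intros)
  then have E: "(\<integral>\<^sup>+x. E x \<partial>lborel) = ennreal (1 / b)"
    by simp
  have E_reflect: "(\<integral>\<^sup>+x. E (- x) \<partial>lborel) = ennreal (1 / b)"
    using nn_integral_real_affine[OF E_borel, of "-1" 0] E by simp
  have "(\<integral>\<^sup>+x. ennreal (exp (- b * \<bar>x\<bar>)) \<partial>lborel) \<le> (\<integral>\<^sup>+x. E x + E (- x) \<partial>lborel)"
    by (intro nn_integral_mono) (auto simp: E_def indicator_def abs_if)
  also have "\<dots> = (\<integral>\<^sup>+x. E x \<partial>lborel) + (\<integral>\<^sup>+x. E (- x) \<partial>lborel)"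
    by (rule nn_integral_add) simp_all
  also have "\<dots> = ennreal (2 / b)"
    using E E_reflect b by (simp flip: ennreal_plus)
  finally show ?thesis .
qed

lemma measure_density_abs_gt_le:
  fixes f :: "real \<Rightarrow> real"
  assumes f: "f \<in> borel_measurable lborel" and a: "0 < a" and q: "0 \<le> q" and T: "1 \<le> T"
    and decay: "\<And>x. T \<le> \<bar>x\<bar> \<Longrightarrow> f x \<le> exp (B - a * \<bar>x\<bar> powr (1 + q))"
  shows "measure (density lborel (\<lambda>x. ennreal (f x))) {x. T < \<bar>x\<bar>}
           \<le> 4 / a * exp B * exp (- a / 2 * T powr (1 + q))"
proof -
  define S where "S = {x::real. T < \<bar>x\<bar>}"
  define K where "K = exp B * exp (- a / 2 * T powr (1 + q))"
  have "ennreal (f x) * indicator S x \<le> ennreal K * ennreal (exp (- a / 2 * \<bar>x\<bar>))" for x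
  proof (cases "x \<in> S")
    case True
    then have "T \<le> \<bar>x\<bar>" "1 \<le> \<bar>x\<bar>" using T by (simp_all add: S_def)
    have "\<bar>x\<bar> powr 1 \<le> \<bar>x\<bar> powr (1 + q)"
      using \<open>1 \<le> \<bar>x\<bar>\<close> q by (intro powr_mono) auto
    moreover have "T powr (1 + q) \<le> \<bar>x\<bar> powr (1 + q)"
      using \<open>T \<le> \<bar>x\<bar>\<close> T q by (intro powr_mono2) auto
    ultimately have "a * \<bar>x\<bar> \<le> a * \<bar>x\<bar> powr (1 + q)" "a * T powr (1 + q) \<le> a * \<bar>x\<bar> powr (1 + q)"
      using a \<open>1 \<le> \<bar>x\<bar>\<close> by (simp_all add: mult_left_mono)
    then have "B - a * \<bar>x\<bar> powr (1 + q) \<le> B - a / 2 * T powr (1 + q) - a / 2 * \<bar>x\<bar>"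
      by linarith
    then have "f x \<le> exp (B - a / 2 * T powr (1 + q) - a / 2 * \<bar>x\<bar>)"
      using decay[OF \<open>T \<le> \<bar>x\<bar>\<close>] by (meson exp_le_cancel_iff order_trans)
    also have "\<dots> = K * exp (- a / 2 * \<bar>x\<bar>)"
      by (simp add: K_def mult_exp_exp algebra_simps)
    finally have "ennreal (f x) \<le> ennreal (K * exp (- a / 2 * \<bar>x\<bar>))"
      by (rule ennreal_leI)
    then show ?thesis
      using True by (simp add: K_def ennreal_mult')
  qed simp
  then have "emeasure (density lborel (\<lambda>x. ennreal (f x))) S
      \<le> (\<integral>\<^sup>+x. ennreal K * ennreal (exp (- a / 2 * \<bar>x\<bar>)) \<partial>lborel)"
    using f by (subst emeasure_density) (auto simp: S_def intro!: nn_integral_mono)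
  also have "\<dots> = ennreal K * (\<integral>\<^sup>+x. ennreal (exp (- a / 2 * \<bar>x\<bar>)) \<partial>lborel)"
    by (rule nn_integral_cmult) simp
  also have "\<dots> \<le> ennreal K * ennreal (4 / a)"
    using nn_integral_exp_neg_abs_le[of "a / 2"] a by (intro mult_left_mono) simp_all
  also have "\<dots> = ennreal (4 / a * K)"
    using a by (simp add: K_def flip: ennreal_mult)
  finally show ?thesis
    unfolding measure_def S_def K_def using a by (intro enn2real_leI) (auto simp: mult.assoc)
qed

lemma eventually_measure_density_abs_gt_le:
  fixes f :: "real \<Rightarrow> real"
  assumes f: "f \<in> borel_measurable lborel" and a: "0 < a" and q: "0 \<le> q" and k: "0 \<le> k"
    and R: "1 \<le> R" and decay: "\<And>x. R \<le> \<bar>x\<bar> \<Longrightarrow> f x \<le> exp (B - a * \<bar>x\<bar> powr (1 + q))"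
  shows "eventually (\<lambda>h. measure (density lborel (\<lambda>x. ennreal (f x))) {x. k + h < \<bar>x\<bar>}
           \<le> 4 / a * exp B * exp (- (a / 2) * h powr (1 + q))) at_top"
  using eventually_ge_at_top[of R]
proof eventually_elim
  case (elim h)
  then have "1 \<le> h" "1 \<le> k + h" using R k by linarith+
  have "f x \<le> exp (B - a * \<bar>x\<bar> powr (1 + q))" if "k + h \<le> \<bar>x\<bar>" for x
    using that elim k by (intro decay) linarith
  then have "measure (density lborel (\<lambda>x. ennreal (f x))) {x. k + h < \<bar>x\<bar>}
      \<le> 4 / a * exp B * exp (- a / 2 * (k + h) powr (1 + q))"
    by (rule measure_density_abs_gt_le[OF f a q \<open>1 \<le> k + h\<close>])
  also have "\<dots> \<le> 4 / a * exp B * exp (- (a / 2) * h powr (1 + q))"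
  proof -
    have "h powr (1 + q) \<le> (k + h) powr (1 + q)"
      using \<open>1 \<le> h\<close> k q by (intro powr_mono2) simp_all
    then show ?thesis
      using a by (intro mult_left_mono) simp_all
  qed
  finally show ?case .
qed

lemma mult_exp_neg_le:
  fixes b x :: real
  assumes "0 < b"
  shows "x * exp (- b * x) \<le> 1 / b"
proof -
  have "b * x < exp (b * x)"
    using exp_ge_add_one_self[of "b * x"] by linarith
  then show ?thesis
    using assms by (simp add: exp_minus field_simps)
qed

lemma Limsup_tail_times_growth_finite:
  fixes g :: "real \<Rightarrow> real"
  assumes b: "0 < b" and q: "0 \<le> q" "q \<le> 1" and C: "0 \<le> C"
    and bound: "eventually (\<lambda>h. g h \<le> C * exp (- b * h powr (1 + q))) at_top"
  shows "Limsup at_top (\<lambda>h. ereal (g h * exp (b / 2 * h powr (1 + q) + q * ln h))) < \<infinity>"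
proof -
  have "eventually (\<lambda>h. g h * exp (b / 2 * h powr (1 + q) + q * ln h) \<le> C * (2 / b)) at_top"
    using bound eventually_ge_at_top[of 1]
  proof eventually_elim
    case (elim h)
    define P where "P = h powr (1 + q)"
    have "h powr 1 \<le> P"
      unfolding P_def using elim q by (intro powr_mono) auto
    moreover have "h powr q \<le> h powr 1"
      using elim q by (intro powr_mono) auto
    ultimately have "h powr q \<le> P"
      using elim by simp
    have "g h * exp (b / 2 * P + q * ln h) = g h * (exp (b / 2 * P) * h powr q)"
      using elim by (simp add: exp_add powr_def)
    also have "\<dots> \<le> C * exp (- b * P) * (exp (b / 2 * P) * h powr q)"
      using elim by (intro mult_right_mono) (simp_all add: P_def)
    also have "\<dots> = C * (h powr q * exp (- (b / 2) * P))"
      by (simp add: mult_exp_exp algebra_simps)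
    also have "\<dots> \<le> C * (P * exp (- (b / 2) * P))"
      using \<open>h powr q \<le> P\<close> C by (intro mult_left_mono mult_right_mono) simp_all
    also have "\<dots> \<le> C * (2 / b)"
      using mult_exp_neg_le[of "b / 2" P] b C by (intro mult_left_mono) simp_all
    finally show ?case
      by (simp add: P_def)
  qed
  then have "Limsup at_top (\<lambda>h. ereal (g h * exp (b / 2 * h powr (1 + q) + q * ln h))) \<le> C * (2 / b)"
    by (intro Limsup_bounded) simp
  then show ?thesis
    using le_less_trans by fastforce
qed

lemma Liminf_pos_imp_eventually_gt:
  fixes g :: "'a \<Rightarrow> real"
  assumes "0 < Liminf F (\<lambda>x. ereal (g x))"
  obtains c where "0 < c" "eventually (\<lambda>x. c < g x) F"
proof -
  obtain c' where c': "0 < c'" "c' < Liminf F (\<lambda>x. ereal (g x))"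
    using dense[OF assms] by blast
  then obtain c where "c' = ereal c"
    by (cases c') auto
  moreover have "eventually (\<lambda>x. c' < ereal (g x)) F"
    using le_Liminf_iff[THEN iffD1, OF order.refl] c'(2) by blast
  ultimately show thesis
    using that c'(1) by simp
qed

lemma Liminf_ratio_pos_obtain_lower_bound:
  fixes g :: "real \<Rightarrow> real"
  assumes "0 < Liminf at_infinity (\<lambda>x. ereal (\<bar>g x\<bar> / \<bar>x\<bar> powr q))"
  obtains c R where "0 < c" "1 \<le> R" "\<And>x. R \<le> \<bar>x\<bar> \<Longrightarrow> c * \<bar>x\<bar> powr q < \<bar>g x\<bar>"
proof -
  obtain c where c: "0 < c" and "eventually (\<lambda>x. c < \<bar>g x\<bar> / \<bar>x\<bar> powr q) at_infinity"
    using Liminf_pos_imp_eventually_gt[OF assms] by blast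
  then obtain R0 where R0: "\<And>x. R0 \<le> \<bar>x\<bar> \<Longrightarrow> c < \<bar>g x\<bar> / \<bar>x\<bar> powr q"
    unfolding eventually_at_infinity real_norm_def by blast
  have bound: "c * \<bar>x\<bar> powr q < \<bar>g x\<bar>" if "max R0 1 \<le> \<bar>x\<bar>" for x
  proof -
    have "R0 \<le> \<bar>x\<bar>" "1 \<le> \<bar>x\<bar>" using that by simp_all
    then have "0 < \<bar>x\<bar> powr q" by simp
    then show ?thesis using R0[OF \<open>R0 \<le> \<bar>x\<bar>\<close>] by (simp add: pos_less_divide_eq)
  qed
  show thesis
    by (rule that[of c "max R0 1", OF c _ bound]) simp_all
qed

theorem lemma6:
  fixes \<pi>1 :: "real \<Rightarrow> real" and q k :: real
  assumes pos: "\<And>x. \<pi>1 x > 0"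
    and meas: "\<pi>1 \<in> borel_measurable lborel"
    and intg: "integrable lborel \<pi>1"
    and norm: "integral\<^sup>L lborel \<pi>1 = 1"
    and diff: "\<And>x. (\<lambda>t. ln (\<pi>1 t)) differentiable (at x)"
    and cont: "continuous_on UNIV (deriv (\<lambda>t. ln (\<pi>1 t)))"
    and q: "0 \<le> q" "q < 1"
    and theta_lower: "Liminf at_infinity
           (\<lambda>x. ereal (\<bar>deriv (\<lambda>t. ln (\<pi>1 t)) x\<bar> / \<bar>x\<bar> powr q)) > 0"
    and theta_upper: "Limsup at_infinity
           (\<lambda>x. ereal (\<bar>deriv (\<lambda>t. ln (\<pi>1 t)) x\<bar> / \<bar>x\<bar> powr q)) < \<infinity>"
    and k: "0 \<le> k"
  shows "\<exists>\<gamma>>0. Limsup at_top (\<lambda>h. ereal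
           (measure (density lborel (\<lambda>x. ennreal (\<pi>1 x))) {x. \<bar>x\<bar> > k + h}
            * exp (\<gamma> * h powr (1 + q) + q * ln h))) < \<infinity>"
proof -
  define D where "D = deriv (\<lambda>t. ln (\<pi>1 t))"
  have D: "((\<lambda>t. ln (\<pi>1 t)) has_real_derivative D x) (at x)" for x
    using diff[of x] by (simp add: D_def DERIV_deriv_iff_real_differentiable)
  obtain c R where c: "0 < c" and R: "1 \<le> R" and lower: "\<And>x. R \<le> \<bar>x\<bar> \<Longrightarrow> c * \<bar>x\<bar> powr q < \<bar>D x\<bar>"
    using Liminf_ratio_pos_obtain_lower_bound[OF theta_lower[folded D_def]] by blast
  have "0 < R" "-1 < q"
    using R q by simp_all
  then obtain B where decay: "\<And>x. R \<le> \<bar>x\<bar> \<Longrightarrow> \<pi>1 x \<le> exp (B - c / (1 + q) * \<bar>x\<bar> powr (1 + q))"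
    using stretched_exp_decay[OF pos intg D cont[folded D_def] _ c _ lower] by blast
  define a where "a = c / (1 + q)"
  have a: "0 < a"
    using c q by (simp add: a_def)
  have "\<pi>1 x \<le> exp (B - a * \<bar>x\<bar> powr (1 + q))" if "R \<le> \<bar>x\<bar>" for x
    using decay[OF that] by (simp add: a_def)
  then have tail: "eventually (\<lambda>h. measure (density lborel (\<lambda>x. ennreal (\<pi>1 x))) {x. k + h < \<bar>x\<bar>}
      \<le> 4 / a * exp B * exp (- (a / 2) * h powr (1 + q))) at_top"
    by (rule eventually_measure_density_abs_gt_le[OF meas a q(1) k R])
  have "Limsup at_top (\<lambda>h. ereal (measure (density lborel (\<lambda>x. ennreal (\<pi>1 x))) {x. k + h < \<bar>x\<bar>}
      * exp (a / 2 / 2 * h powr (1 + q) + q * ln h))) < \<infinity>"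
    by (rule Limsup_tail_times_growth_finite[OF _ q(1) _ _ tail]) (use a q in simp_all)
  then show ?thesis
    using a by (intro exI[of _ "a / 2 / 2"]) simp
qed

end
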